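(* Let $n\ge2$. For $j\in\{1,\dots,n\}$ let $L_j\in\mathcal G(n)$ be the $n$-graph with edges $a_1\to a_2,\ a_2\to a_3,\dots,a_{n-1}\to a_n$, where $(a_1,\dots,a_n)=(2,3,\dots,j,1,j+1,\dots,n)$ is the sequence obtained from $(2,3,\dots,n)$ by inserting $1$ in position $j$ (so $L_1$ has edges $1\to2\to\dots\to n$ and $L_n$ has edges $2\to3\to\dots\to n\to1$). Then $$\sum_{j=1}^n L_j\equiv 0 \pmod{R(n)}.$$
   Context: An $n$-graph is an oriented graph with vertex set $\{1,\dots,n\}$, without loops but possibly with multiple edges; $\mathcal G(n)$ is the set of $n$-graphs and $\mathbb F\mathcal G(n)$ the vector space over a field $\mathbb F$ (characteristic $0$) with basis $\mathcal G(n)$. $R(n)\subset\mathbb F\mathcal G(n)$ is the subspace spanned by the cycle relations: (i) every $\Gamma\in\mathcal G(n)$ that contains a cycle of its underlying unoriented multigraph (two edges joining the same two vertices count as a cycle); (ii) every sum $\sum_{e\in C}\Gamma\setminus e$, where $\Gamma\in\mathcal G(n)$, $C\subset E(\Gamma)$ is an oriented cycle, and $\Gamma\setminus e$ is $\Gamma$ with the edge $e$ removed. $\equiv$ denotes equality in $\mathbb F\mathcal G(n)/R(n)$. *)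

theory Defs
  imports Main "HOL-Library.Multiset"
begin

type_synonym ngraph = "(nat \<times> nat) multiset"

definition is_ngraph :: "nat \<Rightarrow> ngraph \<Rightarrow> bool" where
  "is_ngraph n \<Gamma> \<longleftrightarrow> (\<forall>(a,b) \<in> set_mset \<Gamma>. a \<in> {1..n} \<and> b \<in> {1..n} \<and> a \<noteq> b)"

text \<open>Elements of F G(n): functions from graphs to the field (finite linear combinations);
  the basis vector of a graph:\<close>
definition gr :: "ngraph \<Rightarrow> ngraph \<Rightarrow> 'a::field_char_0" where
  "gr \<Gamma> = (\<lambda>\<Delta>. if \<Delta> = \<Gamma> then 1 else 0)"

text \<open>The underlying unoriented multigraph of \<Gamma> contains a cycle: distinct vertices
  v_0,...,v_{k-1} (k \<ge> 2) and distinct edges (a sub-multiset) e_0,...,e_{k-1}, where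
  e_i joins v_i and v_{i+1 mod k} in either orientation.\<close>
definition has_cycle :: "ngraph \<Rightarrow> bool" where
  "has_cycle \<Gamma> \<longleftrightarrow> (\<exists>vs es. distinct vs \<and> length vs \<ge> 2 \<and> length es = length vs \<and>
      mset es \<subseteq># \<Gamma> \<and>
      (\<forall>i < length vs. es ! i = (vs ! i, rotate1 vs ! i) \<or> es ! i = (rotate1 vs ! i, vs ! i)))"

definition cyc_edges :: "nat list \<Rightarrow> ngraph" where
  "cyc_edges vs = mset (zip vs (rotate1 vs))"

inductive_set Rel :: "nat \<Rightarrow> (ngraph \<Rightarrow> 'a::field_char_0) set" for n :: nat where
  zero: "(\<lambda>_. 0) \<in> Rel n"
| add: "f \<in> Rel n \<Longrightarrow> g \<in> Rel n \<Longrightarrow> (\<lambda>\<Delta>. f \<Delta> + g \<Delta>) \<in> Rel n"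
| smult: "f \<in> Rel n \<Longrightarrow> (\<lambda>\<Delta>. c * f \<Delta>) \<in> Rel n"
| cyc: "is_ngraph n \<Gamma> \<Longrightarrow> has_cycle \<Gamma> \<Longrightarrow> gr \<Gamma> \<in> Rel n"
| ocyc: "is_ngraph n \<Gamma> \<Longrightarrow> distinct vs \<Longrightarrow> length vs \<ge> 2 \<Longrightarrow> cyc_edges vs \<subseteq># \<Gamma> \<Longrightarrow>
         (\<lambda>\<Delta>. \<Sum>e \<in># cyc_edges vs. gr (\<Gamma> - {#e#}) \<Delta>) \<in> Rel n"

definition seqL :: "nat \<Rightarrow> nat \<Rightarrow> nat list" where
  "seqL n j = [2..<j+1] @ 1 # [j+1..<n+1]"

definition Lgraph :: "nat \<Rightarrow> nat \<Rightarrow> ngraph" where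
  "Lgraph n j = mset (zip (seqL n j) (tl (seqL n j)))"

lemma "seqL 4 1 = [1,2,3,4]" "seqL 4 4 = [2,3,4,1]" "seqL 4 2 = [2,1,3,4]"
  by (simp_all add: seqL_def upt_rec)

end

theory Submission
  imports Defs "HOL-Library.Function_Algebras"
begin

text \<open>
  Modulo \<open>R(n)\<close>, reversing an edge changes the sign of a graph (the relation of the oriented
  2-cycle \<open>a \<rightarrow> b \<rightarrow> a\<close>). Let \<open>A\<^sub>k\<close> be the path \<open>2 \<rightarrow> \<dots> \<rightarrow> n\<close> together with the edge
  \<open>1 \<rightarrow> k\<close>. For \<open>2 \<le> j < n\<close>, the relation of the oriented triangle \<open>1 \<rightarrow> j+1 \<rightarrow> j \<rightarrow> 1\<close>
  together with three edge reversals gives \<open>L\<^sub>j \<equiv> A\<^sub>j\<^sub>+\<^sub>1 - A\<^sub>j\<close>. Since \<open>L\<^sub>1 = A\<^sub>2\<close>, the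
  sum telescopes to \<open>L\<^sub>n + A\<^sub>n\<close>, and \<open>L\<^sub>n\<close>, \<open>A\<^sub>n\<close> differ by the reversal of the edge
  between \<open>1\<close> and \<open>n\<close>.
\<close>

lemma sum_fun_apply: "(\<Sum>i\<in>I. f i) x = (\<Sum>i\<in>I. f i x)"
  by (induction I rule: infinite_finite_induct) auto

lemma Rel_add: "f \<in> Rel n \<Longrightarrow> g \<in> Rel n \<Longrightarrow> f + g \<in> Rel n"
  unfolding plus_fun_def by (rule Rel.add)

lemma Rel_uminus: "f \<in> Rel n \<Longrightarrow> - f \<in> Rel n"
  using Rel.smult[of f n "-1"] by (simp add: fun_Compl_def)

lemma Rel_diff: "f \<in> Rel n \<Longrightarrow> g \<in> Rel n \<Longrightarrow> f - g \<in> Rel n"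
  using Rel_add Rel_uminus by (metis diff_conv_add_uminus)

lemma Rel_sum: "(\<And>i. i \<in> I \<Longrightarrow> f i \<in> Rel n) \<Longrightarrow> (\<Sum>i\<in>I. f i) \<in> Rel n"
proof (induction I rule: infinite_finite_induct)
  case (infinite I)
  then show ?case using Rel.zero by (simp add: zero_fun_def)
next
  case empty
  then show ?case using Rel.zero by (simp add: zero_fun_def)
next
  case (insert i I)
  show ?case
    unfolding sum.insert[OF insert.hyps] by (rule Rel_add) (use insert in auto)
qed

lemma is_ngraph_add_mset [simp]:
  "is_ngraph n (add_mset (a, b) G) \<longleftrightarrow> a \<in> {1..n} \<and> b \<in> {1..n} \<and> a \<noteq> b \<and> is_ngraph n G"
  unfolding is_ngraph_def by auto

lemma is_ngraph_union [simp]: "is_ngraph n (A + B) \<longleftrightarrow> is_ngraph n A \<and> is_ngraph n B"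
  unfolding is_ngraph_def by auto

lemma gr_reverse_edge_in_Rel:
  assumes "is_ngraph n G" "a \<in> {1..n}" "b \<in> {1..n}" "a \<noteq> b"
  shows "gr (add_mset (a, b) G) + gr (add_mset (b, a) G) \<in> Rel n"
proof -
  have cyc: "cyc_edges [a, b] = {#(a, b), (b, a)#}"
    by (simp add: cyc_edges_def)
  have "(\<lambda>\<Delta>. \<Sum>e \<in># cyc_edges [a, b]. gr (add_mset (a, b) (add_mset (b, a) G) - {#e#}) \<Delta>) \<in> Rel n"
    by (rule Rel.ocyc) (use assms cyc in auto)
  then show ?thesis
    by (simp add: cyc plus_fun_def add_mset_commute add.commute)
qed

lemma gr_triangle_in_Rel:
  assumes "is_ngraph n G" "a \<in> {1..n}" "b \<in> {1..n}" "c \<in> {1..n}" "distinct [a, b, c]"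
  shows "gr (add_mset (b, c) (add_mset (c, a) G)) + gr (add_mset (c, a) (add_mset (a, b) G))
           + gr (add_mset (a, b) (add_mset (b, c) G)) \<in> Rel n"
proof -
  have cyc: "cyc_edges [a, b, c] = {#(a, b), (b, c), (c, a)#}"
    by (simp add: cyc_edges_def)
  have "(\<lambda>\<Delta>. \<Sum>e \<in># cyc_edges [a, b, c].
          gr (add_mset (a, b) (add_mset (b, c) (add_mset (c, a) G)) - {#e#}) \<Delta>) \<in> Rel n"
    by (rule Rel.ocyc) (use assms cyc in auto)
  then show ?thesis
    by (simp add: cyc plus_fun_def add_mset_commute ac_simps)
qed

definition path_edges :: "nat list \<Rightarrow> ngraph" where
  "path_edges xs = mset (zip xs (tl xs))"

lemma path_edges_singleton [simp]: "path_edges [x] = {#}"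
  by (simp add: path_edges_def)

lemma path_edges_Cons_Cons [simp]: "path_edges (x # y # ys) = add_mset (x, y) (path_edges (y # ys))"
  by (simp add: path_edges_def)

lemma path_edges_append:
  "xs \<noteq> [] \<Longrightarrow> ys \<noteq> [] \<Longrightarrow>
     path_edges (xs @ ys) = add_mset (last xs, hd ys) (path_edges xs + path_edges ys)"
proof (induction xs rule: induct_list012)
  case (3 x y zs)
  then show ?case by simp
qed (auto simp: neq_Nil_conv)

lemma is_ngraph_path_edges: "distinct xs \<Longrightarrow> set xs \<subseteq> {1..n} \<Longrightarrow> is_ngraph n (path_edges xs)"
  by (induction xs rule: induct_list012) (auto simp: path_edges_def is_ngraph_def)

lemma Lgraph_eq_path_edges: "Lgraph n j = path_edges ([2..<Suc j] @ [1] @ [Suc j..<Suc n])"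
  by (simp add: Lgraph_def seqL_def path_edges_def)

definition pendant_graph :: "nat \<Rightarrow> nat \<Rightarrow> ngraph" where
  "pendant_graph n k = add_mset (1, k) (path_edges [2..<Suc n])"

lemma Lgraph_first: "n \<ge> 2 \<Longrightarrow> Lgraph n 1 = pendant_graph n 2"
  using path_edges_append[of "[1]" "[2..<Suc n]"]
  by (simp del: upt_Suc add: Lgraph_eq_path_edges pendant_graph_def numeral_2_eq_2)

lemma Lgraph_last: "n \<ge> 2 \<Longrightarrow> Lgraph n n = add_mset (n, 1) (path_edges [2..<Suc n])"
  using path_edges_append[of "[2..<Suc n]" "[1]"]
  by (simp del: upt_Suc add: Lgraph_eq_path_edges)

lemma gr_Lgraph_last_in_Rel:
  assumes "n \<ge> 2"
  shows "gr (Lgraph n n) + gr (pendant_graph n n) \<in> Rel n"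
  unfolding Lgraph_last[OF assms] pendant_graph_def
  by (rule gr_reverse_edge_in_Rel) (use assms in \<open>auto simp del: upt_Suc intro: is_ngraph_path_edges\<close>)

lemma gr_Lgraph_middle_in_Rel:
  assumes j: "2 \<le> j" "j < n"
  shows "gr (Lgraph n j) - (gr (pendant_graph n (Suc j)) - gr (pendant_graph n j)) \<in> Rel n"
proof -
  define Q where "Q = path_edges [2..<Suc j] + path_edges [Suc j..<Suc n]"
  have Q: "is_ngraph n Q"
    unfolding Q_def using j by (auto simp del: upt_Suc intro!: is_ngraph_path_edges)
  have P: "path_edges [2..<Suc n] = add_mset (j, Suc j) Q"
    using path_edges_append[of "[2..<Suc j]" "[Suc j..<Suc n]"] j upt_add_eq_append[of 2 "Suc j" "n - j"]
    by (simp del: upt_Suc add: Q_def)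
  have L: "Lgraph n j = add_mset (j, 1) (add_mset (1, Suc j) Q)"
    using path_edges_append[of "[2..<Suc j]" "[1] @ [Suc j..<Suc n]"]
      path_edges_append[of "[1]" "[Suc j..<Suc n]"] j
    by (simp del: upt_Suc add: Lgraph_eq_path_edges Q_def)
  have vertices: "1 \<in> {1..n}" "Suc j \<in> {1..n}" "j \<in> {1..n}" "distinct [1, Suc j, j]"
    using j by auto
  define X where "X = add_mset (1, Suc j) (add_mset (Suc j, j) Q)"
  define Y where "Y = add_mset (Suc j, j) (add_mset (j, 1) Q)"
  define Z where "Z = add_mset (j, 1) (path_edges [2..<Suc n])"
  have triangle: "gr Y + gr (Lgraph n j) + gr X \<in> Rel n"
    using gr_triangle_in_Rel[OF Q vertices] by (simp add: X_def Y_def L)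
  have reverse_X: "gr X + gr (pendant_graph n (Suc j)) \<in> Rel n"
    using gr_reverse_edge_in_Rel[of n "add_mset (1, Suc j) Q" "Suc j" j] Q vertices
    by (simp del: upt_Suc add: X_def P pendant_graph_def add_mset_commute)
  have reverse_Y: "gr Y + gr Z \<in> Rel n"
    using gr_reverse_edge_in_Rel[of n "add_mset (j, 1) Q" "Suc j" j] Q vertices
    by (simp del: upt_Suc add: Y_def Z_def P add_mset_commute)
  have reverse_Z: "gr Z + gr (pendant_graph n j) \<in> Rel n"
    using gr_reverse_edge_in_Rel[of n "path_edges [2..<Suc n]" j 1] Q vertices
    by (simp del: upt_Suc add: Z_def P pendant_graph_def)
  have "(gr Y + gr (Lgraph n j) + gr X) - (gr X + gr (pendant_graph n (Suc j)))
      - (gr Y + gr Z) + (gr Z + gr (pendant_graph n j)) \<in> Rel n"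
    using Rel_add[OF Rel_diff[OF Rel_diff[OF triangle reverse_X] reverse_Y] reverse_Z] .
  then show ?thesis
    by (simp add: algebra_simps)
qed

theorem lemma4p6:
  fixes n :: nat
  assumes "n \<ge> 2"
  shows "((\<lambda>\<Delta>. \<Sum>j = 1..n. gr (Lgraph n j) \<Delta>) :: ngraph \<Rightarrow> 'a::field_char_0) \<in> Rel n"
proof -
  let ?L = "\<lambda>j. gr (Lgraph n j) :: ngraph \<Rightarrow> 'a" and ?A = "\<lambda>k. gr (pendant_graph n k)"
  have "(\<lambda>\<Delta>. \<Sum>j = 1..n. ?L j \<Delta>) = (\<Sum>j = 1..n. ?L j)"
    by (simp add: sum_fun_apply fun_eq_iff)
  also have "\<dots> = ?L 1 + (\<Sum>j = 2..<n. ?L j) + ?L n"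
    using assms by (simp add: sum.last_plus sum.atLeast_Suc_lessThan numeral_2_eq_2)
  also have "(\<Sum>j = 2..<n. ?L j)
      = (\<Sum>j = 2..<n. ?L j - (?A (Suc j) - ?A j)) + (\<Sum>j = 2..<n. ?A (Suc j) - ?A j)"
    by (simp add: sum_subtractf)
  also have "(\<Sum>j = 2..<n. ?A (Suc j) - ?A j) = ?A n - ?A 2"
    using assms by (rule sum_Suc_diff')
  also have "?L 1 + ((\<Sum>j = 2..<n. ?L j - (?A (Suc j) - ?A j)) + (?A n - ?A 2)) + ?L n
      = (\<Sum>j = 2..<n. ?L j - (?A (Suc j) - ?A j)) + (?L n + ?A n)"
    using Lgraph_first[OF assms] by (simp add: algebra_simps)
  also have "\<dots> \<in> Rel n"
    by (rule Rel_add[OF Rel_sum gr_Lgraph_last_in_Rel[OF assms]]) (use gr_Lgraph_middle_in_Rel in auto)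
  finally show ?thesis .
qed

end
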